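(* Let $q\ge2$, $n\ge2$, $m=n-1$, $R\in[m]$ and $r\equiv m\pmod R$ with $0\le r<R$. Then $$\max_{{\boldsymbol y}\in\Sigma_{q,R}^m}\mathsf{H}^{\mathsf{In}}_{1\text{-}\mathsf{Del}}({\boldsymbol y})=\log_2(nq)-\frac{r}{nq}\left(\left\lceil\tfrac mR\right\rceil+1\right)\log_2\!\left(\left\lceil\tfrac mR\right\rceil+1\right)-\frac{R-r}{nq}\left(\left\lfloor\tfrac mR\right\rfloor+1\right)\log_2\!\left(\left\lfloor\tfrac mR\right\rfloor+1\right),$$ and the maximum is attained only by balanced channel outputs.
   Context: $\Sigma_q=\{0,\dots,q-1\}$. For sequences ${\boldsymbol x}$ of length $N$ and ${\boldsymbol y}$ of length $\ell\le N$, $\omega_{{\boldsymbol y}}({\boldsymbol x})$ is the number of index tuples $1\le i_1<\dots<i_\ell\le N$ with $x_{i_j}=y_j$. The $1$-deletion channel with input length $n$ maps ${\boldsymbol x}\in\Sigma_q^n$ to ${\boldsymbol y}\in\Sigma_q^{n-1}$ with probability $\omega_{{\boldsymbol y}}({\boldsymbol x})/n$; under uniform transmission ($X$ uniform on $\Sigma_q^n$), $\mathsf{H}^{\mathsf{In}}_{1\text{-}\mathsf{Del}}({\boldsymbol y})=H(X\mid Y={\boldsymbol y})$ in bits, with posterior $P({\boldsymbol x}\mid {\boldsymbol y})=\Pr\{{\boldsymbol y}\mid{\boldsymbol x}\}/\sum_{{\boldsymbol x}'}\Pr\{{\boldsymbol y}\mid{\boldsymbol x}'\}$. A run is a maximal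 block of identical consecutive symbols; $\Sigma_{q,R}^m$ is the set of sequences in $\Sigma_q^m$ with exactly $R$ runs. A sequence in $\Sigma_{q,R}^m$ is balanced if it has $r$ runs of length $\lceil m/R\rceil$ and $R-r$ runs of length $\lfloor m/R\rfloor$, where $r\equiv m \pmod R$. *)

theory Defs
  imports Complex_Main "HOL-Library.Multiset"
begin

definition seqs :: "nat \<Rightarrow> nat \<Rightarrow> nat list set" where
  "seqs q N = {x. length x = N \<and> set x \<subseteq> {..<q}}"

definition omega :: "nat list \<Rightarrow> nat list \<Rightarrow> nat" where
  "omega y x = card {I. I \<subseteq> {..<length x} \<and> card I = length y \<and> nths x I = y}"

text \<open>Posterior P(x | y) for the 1-deletion channel with input length n under uniform input:
  Pr(y|x) = omega_y(x)/n, normalised over all inputs x' in Sigma_q^n.\<close>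
definition posterior :: "nat \<Rightarrow> nat \<Rightarrow> nat list \<Rightarrow> nat list \<Rightarrow> real" where
  "posterior q n y x =
     (real (omega y x) / real n) / (\<Sum>x'\<in>seqs q n. real (omega y x') / real n)"

definition H_in_del :: "nat \<Rightarrow> nat \<Rightarrow> nat list \<Rightarrow> real" where
  "H_in_del q n y =
     - (\<Sum>x\<in>seqs q n. let p = posterior q n y x in if p = 0 then 0 else p * log 2 p)"

function run_lengths :: "'a list \<Rightarrow> nat list" where
  "run_lengths [] = []"
| "run_lengths (a # xs) =
     Suc (length (takeWhile (\<lambda>b. b = a) xs)) # run_lengths (dropWhile (\<lambda>b. b = a) xs)"
  by pat_completeness auto
termination
  by (relation "measure length") (auto simp: le_imp_less_Suc length_dropWhile_le)

definition num_runs :: "'a list \<Rightarrow> nat" where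
  "num_runs x = length (run_lengths x)"

definition seqs_runs :: "nat \<Rightarrow> nat \<Rightarrow> nat \<Rightarrow> nat list set" where
  "seqs_runs q R m = {y \<in> seqs q m. num_runs y = R}"

definition balanced :: "nat \<Rightarrow> nat \<Rightarrow> nat list \<Rightarrow> bool" where
  "balanced R m y \<longleftrightarrow>
     mset (run_lengths y) =
       replicate_mset (m mod R) (nat \<lceil>real m / real R\<rceil>) +
       replicate_mset (R - m mod R) (nat \<lfloor>real m / real R\<rfloor>)"

end

theory Submission
  imports Defs
begin

text \<open>
  The posterior of \<open>x\<close> given \<open>y\<close> is proportional to \<open>omega y x\<close>, which counts the pairs
  \<open>(i, a)\<close> such that inserting the symbol \<open>a\<close> at position \<open>i\<close> of \<open>y\<close> gives \<open>x\<close>. There are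
  \<open>n q\<close> such pairs, so \<open>H(y) = log (n q) - S / (n q)\<close>, where \<open>S\<close> is the sum over all pairs of
  \<open>log (omega y (ins_at i a y))\<close>. Inserting \<open>c\<close> anywhere inside or next to a run of \<open>p\<close> copies
  of \<open>c\<close> gives one and the same sequence, while all other insertions give distinct sequences;
  hence \<open>S\<close> is the sum of \<open>(p + 1) log (p + 1)\<close> over the run lengths \<open>p\<close> of \<open>y\<close>. This
  function of \<open>p\<close> is strictly convex, so among \<open>R\<close> run lengths with sum \<open>m\<close> the sum is minimal
  exactly when they differ by at most one, and such run lengths are realised by a binary sequence.
\<close>

section \<open>Inserting one symbol\<close>

definition ins_at :: "nat \<Rightarrow> 'a \<Rightarrow> 'a list \<Rightarrow> 'a list" where
  "ins_at i a y = take i y @ a # drop i y"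

definition del_at :: "nat \<Rightarrow> 'a list \<Rightarrow> 'a list" where
  "del_at i x = take i x @ drop (Suc i) x"

lemma length_ins_at [simp]: "i \<le> length y \<Longrightarrow> length (ins_at i a y) = Suc (length y)"
  by (simp add: ins_at_def)

lemma mset_ins_at [simp]: "i \<le> length y \<Longrightarrow> mset (ins_at i a y) = add_mset a (mset y)"
  by (metis append_take_drop_id mset.simps(2) mset_append ins_at_def union_mset_add_mset_right)

lemma set_ins_at [simp]: "i \<le> length y \<Longrightarrow> set (ins_at i a y) = insert a (set y)"
  by (metis mset_ins_at set_mset_add_mset_insert set_mset_mset)

lemma nth_ins_at_self [simp]: "i \<le> length y \<Longrightarrow> ins_at i a y ! i = a"
  by (simp add: ins_at_def nth_append)

lemma del_at_ins_at [simp]: "i \<le> length y \<Longrightarrow> del_at i (ins_at i a y) = y"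
  by (simp add: ins_at_def del_at_def)

lemma ins_at_del_at: "i < length x \<Longrightarrow> ins_at i (x ! i) (del_at i x) = x"
  by (simp add: ins_at_def del_at_def id_take_nth_drop[symmetric])

lemma nths_Diff_singleton:
  assumes "i < length x"
  shows "nths x ({..<length x} - {i}) = del_at i x"
proof -
  have x: "x = take i x @ x ! i # drop (Suc i) x"
    using assms by (simp add: id_take_nth_drop)
  have "nths (take i x) ({..<length x} - {i}) = take i x"
    by (rule nths_all) (use assms in auto)
  moreover have "nths (drop (Suc i) x) {j. Suc (j + i) \<in> {..<length x} - {i}} = drop (Suc i) x"
    by (rule nths_all) auto
  ultimately show ?thesis
    using assms by (subst x) (simp add: nths_append nths_Cons del_at_def)
qed

lemma Cons_eq_snoc_iff: "a # w = w @ [a] \<longleftrightarrow> (\<forall>t\<in>set w. t = a)"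
  by (induction w) auto

lemma ins_at_eq_ins_at_iff_le:
  assumes "i \<le> j" "j \<le> length y"
  shows "ins_at i a y = ins_at j a y \<longleftrightarrow> (\<forall>k. i \<le> k \<and> k < j \<longrightarrow> y ! k = a)"
proof -
  define w where "w = take (j - i) (drop i y)"
  have "take j y = take i y @ w"
    using assms by (simp add: w_def flip: take_add)
  moreover have "drop i y = w @ drop j y"
    using assms unfolding w_def by (metis append_take_drop_id drop_drop le_add_diff_inverse2)
  ultimately have "ins_at i a y = ins_at j a y \<longleftrightarrow> a # w = w @ [a]"
    by (simp add: ins_at_def)
  also have "\<dots> \<longleftrightarrow> (\<forall>t\<in>set w. t = a)"
    by (rule Cons_eq_snoc_iff)
  also have "\<dots> \<longleftrightarrow> (\<forall>k < j - i. y ! (i + k) = a)"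
    using assms by (simp add: all_set_conv_all_nth w_def)
  also have "\<dots> \<longleftrightarrow> (\<forall>k. i \<le> k \<and> k < j \<longrightarrow> y ! k = a)"
  proof (intro iffI allI impI)
    fix k assume "\<forall>k < j - i. y ! (i + k) = a" and "i \<le> k \<and> k < j"
    then show "y ! k = a"
      by (metis diff_less_mono le_add_diff_inverse)
  qed auto
  finally show ?thesis .
qed

lemma ins_at_eq_ins_at_iff:
  assumes "i \<le> length y" "j \<le> length y"
  shows "ins_at i a y = ins_at j a y \<longleftrightarrow> (\<forall>k. min i j \<le> k \<and> k < max i j \<longrightarrow> y ! k = a)"
  using ins_at_eq_ins_at_iff_le[of i j y a] ins_at_eq_ins_at_iff_le[of j i y a] assms
  by (cases "i \<le> j") (auto simp: min_def max_def)

lemma omega_eq_card_deletions: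
  assumes "length x = Suc (length y)"
  shows "omega y x = card {i. i < length x \<and> del_at i x = y}"
proof -
  let ?n = "length x"
  let ?D = "{i. i < ?n \<and> del_at i x = y}"
  have "{I. I \<subseteq> {..<?n} \<and> card I = length y \<and> nths x I = y} = (\<lambda>i. {..<?n} - {i}) ` ?D"
  proof (intro set_eqI iffI)
    fix I assume "I \<in> {I. I \<subseteq> {..<?n} \<and> card I = length y \<and> nths x I = y}"
    then have I: "I \<subseteq> {..<?n}" "card I = length y" "nths x I = y"
      by simp_all
    then have "card ({..<?n} - I) = 1"
      using assms by (simp add: card_Diff_subset finite_subset)
    then obtain i where i: "{..<?n} - I = {i}"
      by (auto simp: card_1_singleton_iff)
    then have "i < ?n"
      by blast
    have I_eq: "I = {..<?n} - {i}"
      using I(1) by (simp flip: i) blast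
    have "del_at i x = y"
      using I(3) \<open>i < ?n\<close> nths_Diff_singleton[of i x] unfolding I_eq by simp
    with I_eq show "I \<in> (\<lambda>i. {..<?n} - {i}) ` ?D"
      using \<open>i < ?n\<close> by blast
  next
    fix I assume "I \<in> (\<lambda>i. {..<?n} - {i}) ` ?D"
    then obtain i where "i < ?n" "del_at i x = y" "I = {..<?n} - {i}"
      by blast
    moreover from this have "nths x I = y"
      using nths_Diff_singleton[of i x] by simp
    ultimately show "I \<in> {I. I \<subseteq> {..<?n} \<and> card I = length y \<and> nths x I = y}"
      using assms by simp
  qed
  moreover have "inj_on (\<lambda>i. {..<?n} - {i}) ?D"
    by (auto simp: inj_on_def)
  ultimately show ?thesis
    by (simp add: omega_def card_image)
qed

lemma omega_eq_card_insertions: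
  assumes "length x = Suc (length y)"
  shows "omega y x = card {(i, a). i \<le> length y \<and> ins_at i a y = x}"
proof -
  have "{(i, a). i \<le> length y \<and> ins_at i a y = x} =
      (\<lambda>i. (i, x ! i)) ` {i. i < length x \<and> del_at i x = y}"
    using assms by (force simp: image_iff ins_at_del_at)
  moreover have "inj_on (\<lambda>i. (i, x ! i)) {i. i < length x \<and> del_at i x = y}"
    by (auto simp: inj_on_def)
  ultimately show ?thesis
    using assms by (simp add: omega_eq_card_deletions card_image)
qed

definition ins_mult :: "'a list \<Rightarrow> 'a \<Rightarrow> nat \<Rightarrow> nat" where
  "ins_mult y a i = card {j. j \<le> length y \<and> ins_at j a y = ins_at i a y}"

lemma omega_ins_at:
  assumes "i \<le> length y"
  shows "omega y (ins_at i a y) = ins_mult y a i"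
proof -
  have "b = a" if "j \<le> length y" "ins_at j b y = ins_at i a y" for j b
    using arg_cong[OF that(2), of mset] that(1) assms by simp
  then have "{(j, b). j \<le> length y \<and> ins_at j b y = ins_at i a y} =
      (\<lambda>j. (j, a)) ` {j. j \<le> length y \<and> ins_at j a y = ins_at i a y}"
    by auto
  then show ?thesis
    using assms by (simp add: omega_eq_card_insertions ins_mult_def card_image inj_on_def)
qed

lemma ins_mult_pos: "i \<le> length y \<Longrightarrow> 0 < ins_mult y a i"
  by (auto simp: ins_mult_def card_gt_0_iff)

lemma ins_mult_eq_card:
  assumes "i \<le> length y"
  shows "ins_mult y a i = card {j. j \<le> length y \<and> (\<forall>k. min j i \<le> k \<and> k < max j i \<longrightarrow> y ! k = a)}"
  unfolding ins_mult_def using assms by (intro arg_cong[where f = card]) (auto simp: ins_at_eq_ins_at_iff)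

lemma ins_mult_isolated:
  assumes "i \<le> length y" "i = 0 \<or> y ! (i - 1) \<noteq> a" "i = length y \<or> y ! i \<noteq> a"
  shows "ins_mult y a i = 1"
proof -
  have "{j. j \<le> length y \<and> (\<forall>k. min j i \<le> k \<and> k < max j i \<longrightarrow> y ! k = a)} = {i}"
  proof (intro set_eqI iffI)
    fix j assume j: "j \<in> {j. j \<le> length y \<and> (\<forall>k. min j i \<le> k \<and> k < max j i \<longrightarrow> y ! k = a)}"
    show "j \<in> {i}"
    proof (cases j i rule: linorder_cases)
      case less
      then have "y ! (i - 1) = a"
        using j by auto
      then show ?thesis
        using assms less by auto
    next
      case greater
      then have "y ! i = a"
        using j by auto
      then show ?thesis
        using assms greater j by auto
    qed simp
  qed (use assms in auto)
  then show ?thesis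
    using assms by (simp add: ins_mult_eq_card)
qed

section \<open>The posterior entropy\<close>

lemma finite_seqs: "finite (seqs q N)"
  using finite_lists_length_eq[of "{..<q}" N] by (simp add: seqs_def conj_commute)

lemma ins_at_in_seqs:
  assumes "y \<in> seqs q m" "i \<le> m" "a < q"
  shows "ins_at i a y \<in> seqs q (Suc m)"
  using assms by (simp add: seqs_def)

lemma sum_seqs_omega_mult:
  assumes y: "y \<in> seqs q m"
  shows "(\<Sum>x\<in>seqs q (Suc m). real (omega y x) * F x) =
         (\<Sum>(i, a)\<in>{..m} \<times> {..<q}. F (ins_at i a y))"
proof -
  let ?D = "{..m} \<times> {..<q}"
  let ?g = "\<lambda>(i, a). ins_at i a y"
  have fibre: "{d \<in> ?D. ?g d = x} = {(i, a). i \<le> length y \<and> ins_at i a y = x}"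
    if "x \<in> seqs q (Suc m)" for x
  proof -
    have "a < q" if "i \<le> m" "ins_at i a y = x" for i a
      using \<open>x \<in> seqs q (Suc m)\<close> that y by (auto simp: seqs_def)
    then show ?thesis
      using y by (auto simp: seqs_def)
  qed
  have sum_fibre: "(\<Sum>d\<in>{d \<in> ?D. ?g d = x}. F (?g d)) = real (omega y x) * F x"
    if "x \<in> seqs q (Suc m)" for x
  proof -
    have "(\<Sum>d\<in>{d \<in> ?D. ?g d = x}. F (?g d)) = (\<Sum>d\<in>{d \<in> ?D. ?g d = x}. F x)"
      by (rule sum.cong) auto
    also have "\<dots> = real (card {d \<in> ?D. ?g d = x}) * F x"
      by simp
    also have "card {d \<in> ?D. ?g d = x} = omega y x"
      using that y by (simp add: fibre omega_eq_card_insertions seqs_def)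
    finally show ?thesis .
  qed
  have "(\<Sum>d\<in>?D. F (?g d)) = (\<Sum>x\<in>seqs q (Suc m). \<Sum>d\<in>{d \<in> ?D. ?g d = x}. F (?g d))"
    using y by (intro sum.group[symmetric]) (auto simp: finite_seqs ins_at_in_seqs)
  also have "\<dots> = (\<Sum>x\<in>seqs q (Suc m). real (omega y x) * F x)"
    by (rule sum.cong) (simp_all only: sum_fibre)
  finally show ?thesis
    by (simp only: prod.case_distrib)
qed

definition ins_log_sum :: "nat \<Rightarrow> nat list \<Rightarrow> real" where
  "ins_log_sum q y = (\<Sum>a<q. \<Sum>i\<le>length y. log 2 (real (ins_mult y a i)))"

lemma H_in_del_eq_ins_log_sum:
  assumes y: "y \<in> seqs q m" and "0 < q"
  shows "H_in_del q (Suc m) y =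
           log 2 (real (Suc m) * real q) - ins_log_sum q y / (real (Suc m) * real q)"
proof -
  define N where "N = real (Suc m) * real q"
  have N: "0 < N"
    using \<open>0 < q\<close> by (simp add: N_def)
  have m: "length y = m"
    using y by (simp add: seqs_def)
  have "(\<Sum>x\<in>seqs q (Suc m). real (omega y x)) = N"
    using sum_seqs_omega_mult[OF y, of "\<lambda>_. 1"] by (simp add: N_def algebra_simps)
  then have posterior: "posterior q (Suc m) y x = real (omega y x) / N" for x
    by (simp add: posterior_def N_def flip: sum_divide_distrib)
  have "(\<Sum>x\<in>seqs q (Suc m). let p = posterior q (Suc m) y x in if p = 0 then 0 else p * log 2 p) =
        (\<Sum>x\<in>seqs q (Suc m). real (omega y x) * (log 2 (real (omega y x) / N) / N))"
    by (rule sum.cong) (simp_all add: posterior Let_def)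
  also have "\<dots> = (\<Sum>(i, a)\<in>{..m} \<times> {..<q}. log 2 (real (omega y (ins_at i a y)) / N) / N)"
    by (rule sum_seqs_omega_mult[OF y])
  also have "\<dots> = (\<Sum>(i, a)\<in>{..m} \<times> {..<q}. (log 2 (real (ins_mult y a i)) - log 2 N) / N)"
    by (rule sum.cong) (auto simp: omega_ins_at m log_divide ins_mult_pos N)
  also have "\<dots> = ins_log_sum q y / N - log 2 N"
  proof -
    have "(\<Sum>(i, a)\<in>{..m} \<times> {..<q}. log 2 (real (ins_mult y a i))) = ins_log_sum q y"
      by (simp add: ins_log_sum_def m sum.cartesian_product[symmetric] sum.swap[of _ "{..m}"])
    then show ?thesis
      using N by (simp add: split_def sum_subtractf N_def flip: sum_divide_distrib) (simp add: field_simps)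
  qed
  finally show ?thesis
    by (simp add: H_in_del_def N_def)
qed

section \<open>Runs\<close>

lemma run_lengths_replicate_append:
  assumes "0 < p" "z = [] \<or> hd z \<noteq> c"
  shows "run_lengths (replicate p c @ z) = p # run_lengths z"
proof -
  obtain p' where p: "p = Suc p'"
    using assms(1) gr0_implies_Suc by blast
  have "takeWhile (\<lambda>b. b = c) z = []" "dropWhile (\<lambda>b. b = c) z = z"
    using assms(2) by (cases z; simp)+
  then have "takeWhile (\<lambda>b. b = c) (replicate p' c @ z) = replicate p' c"
    "dropWhile (\<lambda>b. b = c) (replicate p' c @ z) = z"
    by (subst takeWhile_append2 dropWhile_append2; auto)+
  then show ?thesis
    by (simp add: p)
qed

lemma Cons_eq_replicate_append_dropWhile:
  "a # xs = replicate (Suc (length (takeWhile (\<lambda>b. b = a) xs))) a @ dropWhile (\<lambda>b. b = a) xs"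
proof -
  have "takeWhile (\<lambda>b. b = a) xs = replicate (length (takeWhile (\<lambda>b. b = a) xs)) a"
    by (rule replicate_length_same[symmetric]) (auto dest: set_takeWhileD)
  then show ?thesis
    by (simp flip: \<open>takeWhile (\<lambda>b. b = a) xs = _\<close>)
qed

lemma dropWhile_eq_Nil_or_hd_neq: "dropWhile (\<lambda>b. b = a) xs = [] \<or> hd (dropWhile (\<lambda>b. b = a) xs) \<noteq> a"
  using hd_dropWhile[of "\<lambda>b. b = a" xs] by auto

lemma sum_list_run_lengths: "sum_list (run_lengths y) = length y"
proof (induction y rule: run_lengths.induct)
  case (2 a xs)
  then show ?case
    using length_append[of "takeWhile (\<lambda>b. b = a) xs" "dropWhile (\<lambda>b. b = a) xs"] by simp
qed simp

lemma exists_run_lengths: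
  assumes "0 \<notin> set L" "b \<noteq> c"
  shows "\<exists>y. run_lengths y = L \<and> set y \<subseteq> {b, c} \<and> (y = [] \<or> hd y = b)"
  using assms
proof (induction L arbitrary: b c)
  case Nil
  show ?case
    by (intro exI[of _ "[]"]) simp
next
  case (Cons p L)
  then have "0 \<notin> set L" "c \<noteq> b" "0 < p"
    by auto
  with Cons.IH obtain y where y: "run_lengths y = L" "set y \<subseteq> {c, b}" "y = [] \<or> hd y = c"
    by blast
  have "run_lengths (replicate p b @ y) = p # L"
    using run_lengths_replicate_append[OF \<open>0 < p\<close>, of y b] y(1,3) \<open>c \<noteq> b\<close> by auto
  moreover have "set (replicate p b @ y) \<subseteq> {b, c}"
    using y(2) by auto
  moreover have "hd (replicate p b @ y) = b"
    using \<open>0 < p\<close> by (cases p) auto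
  ultimately show ?case
    by blast
qed

lemma nth_replicate_append_length:
  "z \<noteq> [] \<Longrightarrow> (replicate p c @ z) ! p = hd z"
  by (simp add: nth_append hd_conv_nth)

lemma ins_mult_replicate_append_same:
  assumes "i \<le> p" "z = [] \<or> hd z \<noteq> c"
  shows "ins_mult (replicate p c @ z) c i = Suc p"
proof -
  let ?y = "replicate p c @ z"
  have "{j. j \<le> length ?y \<and> (\<forall>k. min j i \<le> k \<and> k < max j i \<longrightarrow> ?y ! k = c)} = {..p}"
  proof (intro set_eqI iffI)
    fix j assume j: "j \<in> {j. j \<le> length ?y \<and> (\<forall>k. min j i \<le> k \<and> k < max j i \<longrightarrow> ?y ! k = c)}"
    show "j \<in> {..p}"
    proof (rule ccontr)
      assume "j \<notin> {..p}"
      then have "z \<noteq> []" "?y ! p = c"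
        using assms j by auto
      then show False
        using assms nth_replicate_append_length by metis
    qed
  qed (use assms in \<open>auto simp: nth_append\<close>)
  then show ?thesis
    using assms by (simp add: ins_mult_eq_card)
qed

lemma ins_mult_replicate_append_shift:
  assumes "0 < p" "z = [] \<or> hd z \<noteq> c" "i \<le> length z" "a \<noteq> c \<or> 0 < i"
  shows "ins_mult (replicate p c @ z) a (p + i) = ins_mult z a i"
proof -
  let ?y = "replicate p c @ z"
  let ?S = "\<lambda>y i. {j. j \<le> length y \<and> (\<forall>k. min j i \<le> k \<and> k < max j i \<longrightarrow> y ! k = a)}"
  have shift: "(\<forall>k. min (p + j) (p + i) \<le> k \<and> k < max (p + j) (p + i) \<longrightarrow> ?y ! k = a) \<longleftrightarrow>
      (\<forall>k. min j i \<le> k \<and> k < max j i \<longrightarrow> z ! k = a)" for j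
  proof (intro iffI allI impI)
    fix k assume "\<forall>k. min (p + j) (p + i) \<le> k \<and> k < max (p + j) (p + i) \<longrightarrow> ?y ! k = a"
      and "min j i \<le> k \<and> k < max j i"
    then show "z ! k = a"
      by (auto dest: spec[of _ "p + k"] simp: nth_append)
  next
    fix k assume "\<forall>k. min j i \<le> k \<and> k < max j i \<longrightarrow> z ! k = a"
      and "min (p + j) (p + i) \<le> k \<and> k < max (p + j) (p + i)"
    then show "?y ! k = a"
      by (auto dest: spec[of _ "k - p"] simp: nth_append)
  qed
  have after_run: "p \<le> j" if "j \<in> ?S ?y (p + i)" for j
  proof (rule ccontr)
    assume "\<not> p \<le> j"
    then have "min j (p + i) \<le> p - 1" "p - 1 < max j (p + i)" "min j (p + i) \<le> p" "p < max j (p + i) \<or> i = 0"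
      by auto
    then have "?y ! (p - 1) = a" "i \<noteq> 0 \<Longrightarrow> ?y ! p = a"
      using that by auto
    moreover have "?y ! (p - 1) = c"
      using assms by (simp add: nth_append)
    moreover have "i \<noteq> 0 \<Longrightarrow> ?y ! p \<noteq> c"
      using assms nth_replicate_append_length[of z p c] by force
    ultimately show False
      using assms by auto
  qed
  have "?S ?y (p + i) = (+) p ` ?S z i"
  proof (intro set_eqI iffI)
    fix j assume j: "j \<in> ?S ?y (p + i)"
    then have "j = p + (j - p)" "j - p \<in> ?S z i"
      using after_run[OF j] shift[of "j - p"] by auto
    then show "j \<in> (+) p ` ?S z i"
      by blast
  next
    fix j assume "j \<in> (+) p ` ?S z i"
    then obtain j' where "j = p + j'" "j' \<in> ?S z i"
      by blast
    then show "j \<in> ?S ?y (p + i)"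
      using shift[of j'] by simp
  qed
  then show ?thesis
    using assms by (simp add: ins_mult_eq_card card_image)
qed

definition run_weight :: "nat \<Rightarrow> real" where
  "run_weight k = (real k + 1) * log 2 (real k + 1)"

lemma sum_atMost_add_split:
  fixes f :: "nat \<Rightarrow> 'b::comm_monoid_add"
  shows "(\<Sum>i\<le>p + n. f i) = (\<Sum>i<p. f i) + (\<Sum>i\<le>n. f (p + i))"
  by (induction n) (auto simp: add.assoc simp flip: lessThan_Suc_atMost)

lemma sum_log_ins_mult_replicate_append:
  assumes "0 < p" "z = [] \<or> hd z \<noteq> c"
  shows "(\<Sum>i\<le>length (replicate p c @ z). log 2 (real (ins_mult (replicate p c @ z) a i))) =
         (if a = c then run_weight p else 0) + (\<Sum>i\<le>length z. log 2 (real (ins_mult z a i)))"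
proof -
  let ?y = "replicate p c @ z"
  let ?L = "if a = c then log 2 (real p + 1) else 0"
  have inside: "log 2 (real (ins_mult ?y a i)) = ?L" if "i < p" for i
  proof (cases "a = c")
    case True
    then show ?thesis
      using that assms ins_mult_replicate_append_same[of i p z c] by (simp add: add.commute)
  next
    case False
    have "?y ! i = c" "?y ! (i - 1) = c"
      using that by (simp_all add: nth_append less_imp_diff_less)
    have "ins_mult ?y a i = 1"
    proof (rule ins_mult_isolated)
      show "i \<le> length ?y"
        using that by simp
      show "i = 0 \<or> ?y ! (i - 1) \<noteq> a" "i = length ?y \<or> ?y ! i \<noteq> a"
        using \<open>?y ! (i - 1) = c\<close> \<open>?y ! i = c\<close> False by simp_all
    qed
    then show ?thesis
      using False by simp
  qed
  have after: "log 2 (real (ins_mult ?y a (p + i))) =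
      (if i = 0 then ?L else 0) + log 2 (real (ins_mult z a i))" if "i \<le> length z" for i
  proof (cases "a = c \<and> i = 0")
    case True
    have "ins_mult z c 0 = 1"
      using assms(2) by (intro ins_mult_isolated) (simp, simp, cases z, simp_all)
    then show ?thesis
      using True assms ins_mult_replicate_append_same[of p p z c] by (simp add: add.commute)
  next
    case False
    then show ?thesis
      using that assms ins_mult_replicate_append_shift[of p z c i a] by auto
  qed
  have "(\<Sum>i\<le>length ?y. log 2 (real (ins_mult ?y a i))) =
      (\<Sum>i<p. log 2 (real (ins_mult ?y a i))) + (\<Sum>i\<le>length z. log 2 (real (ins_mult ?y a (p + i))))"
    unfolding length_append length_replicate by (rule sum_atMost_add_split)
  also have "\<dots> = (\<Sum>i<p. ?L) + (\<Sum>i\<le>length z. (if i = 0 then ?L else 0) + log 2 (real (ins_mult z a i)))"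
    using inside after by (intro arg_cong2[where f = "(+)"] sum.cong) auto
  also have "\<dots> = real p * ?L + ?L + (\<Sum>i\<le>length z. log 2 (real (ins_mult z a i)))"
    by (simp add: sum.distrib)
  also have "\<dots> = (if a = c then run_weight p else 0) + (\<Sum>i\<le>length z. log 2 (real (ins_mult z a i)))"
    by (simp add: run_weight_def algebra_simps)
  finally show ?thesis .
qed

lemma ins_log_sum_replicate_append:
  assumes "0 < p" "z = [] \<or> hd z \<noteq> c" "c < q"
  shows "ins_log_sum q (replicate p c @ z) = run_weight p + ins_log_sum q z"
  unfolding ins_log_sum_def sum_log_ins_mult_replicate_append[OF assms(1,2)]
  using assms(3) by (simp add: sum.distrib)

lemma ins_log_sum_eq_run_weights:
  "set y \<subseteq> {..<q} \<Longrightarrow> ins_log_sum q y = sum_list (map run_weight (run_lengths y))"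
proof (induction y rule: run_lengths.induct)
  case 1
  have "ins_mult [] a 0 = 1" for a :: nat
    by (rule ins_mult_isolated) simp_all
  then show ?case
    by (simp add: ins_log_sum_def)
next
  case (2 a xs)
  let ?p = "Suc (length (takeWhile (\<lambda>b. b = a) xs))"
  let ?z = "dropWhile (\<lambda>b. b = a) xs"
  have "set ?z \<subseteq> {..<q}"
    using "2.prems" by (auto dest: set_dropWhileD)
  moreover have "ins_log_sum q (a # xs) = run_weight ?p + ins_log_sum q ?z"
    using "2.prems" dropWhile_eq_Nil_or_hd_neq[of a xs]
    by (subst Cons_eq_replicate_append_dropWhile) (rule ins_log_sum_replicate_append; simp)
  ultimately show ?case
    using "2.IH" by simp
qed

lemma H_in_del_eq_run_weights:
  assumes "y \<in> seqs q m" "0 < q"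
  shows "H_in_del q (Suc m) y =
           log 2 (real (Suc m) * real q)
           - sum_list (map run_weight (run_lengths y)) / (real (Suc m) * real q)"
  using assms by (simp add: H_in_del_eq_ins_log_sum ins_log_sum_eq_run_weights seqs_def)

section \<open>Discrete convexity\<close>

definition balanced_sum :: "(nat \<Rightarrow> real) \<Rightarrow> nat \<Rightarrow> nat \<Rightarrow> real" where
  "balanced_sum g R m = real (R - m mod R) * g (m div R) + real (m mod R) * g (Suc (m div R))"

lemma secant_less:
  fixes g :: "nat \<Rightarrow> real"
  assumes conv: "strict_mono (\<lambda>k. g (Suc k) - g k)" and "k \<noteq> f" "k \<noteq> Suc f"
  shows "g f + (real k - real f) * (g (Suc f) - g f) < g k"
proof -
  let ?d = "\<lambda>k. g (Suc k) - g k"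
  show ?thesis
  proof (cases "f < k")
    case True
    have "(\<Sum>t = f..<k. ?d f) < (\<Sum>t = f..<k. ?d t)"
    proof (rule sum_strict_mono_ex1)
      show "\<forall>t\<in>{f..<k}. ?d f \<le> ?d t"
        using strict_mono_less_eq[OF conv] by auto
      show "\<exists>t\<in>{f..<k}. ?d f < ?d t"
        using True assms(3) strict_mono_less[OF conv] by (intro bexI[of _ "Suc f"]) auto
    qed simp
    then show ?thesis
      using True by (simp add: sum_Suc_diff' of_nat_diff algebra_simps)
  next
    case False
    then have "k < f"
      using assms(2) by simp
    have "(\<Sum>t = k..<f. ?d t) < (\<Sum>t = k..<f. ?d f)"
    proof (rule sum_strict_mono_ex1)
      show "\<forall>t\<in>{k..<f}. ?d t \<le> ?d f"
        using strict_mono_less_eq[OF conv] by auto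
      show "\<exists>t\<in>{k..<f}. ?d t < ?d f"
        using \<open>k < f\<close> strict_mono_less[OF conv] by (intro bexI[of _ k]) auto
    qed simp
    then show ?thesis
      using \<open>k < f\<close> by (simp add: sum_Suc_diff' of_nat_diff algebra_simps)
  qed
qed

lemma secant_le:
  fixes g :: "nat \<Rightarrow> real"
  assumes "strict_mono (\<lambda>k. g (Suc k) - g k)"
  shows "g f + (real k - real f) * (g (Suc f) - g f) \<le> g k"
  using secant_less[OF assms, of k f] by (cases "k = f \<or> k = Suc f") auto

lemma sum_list_secant:
  fixes g :: "nat \<Rightarrow> real"
  assumes "f = sum_list L div length L"
  shows "sum_list (map (\<lambda>k. g f + (real k - real f) * (g (Suc f) - g f)) L) =
         balanced_sum g (length L) (sum_list L)"
proof -
  let ?R = "length L" and ?m = "sum_list L"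
  have lin: "sum_list (map (\<lambda>k. g f + (real k - real f) * (g (Suc f) - g f)) L) =
      real ?R * g f + (real ?m - real ?R * real f) * (g (Suc f) - g f)"
    by (induction L) (simp_all add: algebra_simps)
  have r: "real ?m - real ?R * real f = real (?m mod ?R)"
    using assms div_mult_mod_eq[of ?m ?R] by (metis add_diff_cancel_left' of_nat_add of_nat_mult mult.commute)
  have "?m mod ?R \<le> ?R"
    by (cases "L = []") (simp_all add: less_imp_le)
  then show ?thesis
    unfolding lin r using assms by (simp add: balanced_sum_def of_nat_diff algebra_simps)
qed

lemma balanced_sum_le_sum_list:
  fixes g :: "nat \<Rightarrow> real"
  assumes "strict_mono (\<lambda>k. g (Suc k) - g k)"
  shows "balanced_sum g (length L) (sum_list L) \<le> sum_list (map g L)"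
  unfolding sum_list_secant[OF refl, symmetric]
  by (intro sum_list_mono secant_le assms)

lemma set_subset_if_sum_list_eq_balanced_sum:
  fixes g :: "nat \<Rightarrow> real"
  assumes "strict_mono (\<lambda>k. g (Suc k) - g k)"
    and "sum_list (map g L) = balanced_sum g (length L) (sum_list L)"
  shows "set L \<subseteq> {sum_list L div length L, Suc (sum_list L div length L)}"
proof (rule ccontr)
  define f where "f = sum_list L div length L"
  let ?h = "\<lambda>k. g f + (real k - real f) * (g (Suc f) - g f)"
  assume "\<not> ?thesis"
  then obtain k where k: "k \<in> set L" "k \<noteq> f" "k \<noteq> Suc f"
    by (auto simp: f_def)
  then obtain L1 L2 where L: "L = L1 @ k # L2"
    by (meson split_list)
  have "sum_list (map ?h L1) \<le> sum_list (map g L1)" "sum_list (map ?h L2) \<le> sum_list (map g L2)"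
    by (intro sum_list_mono secant_le assms(1))+
  moreover have "?h k < g k"
    using k by (intro secant_less assms(1))
  ultimately have "sum_list (map ?h L) < sum_list (map g L)"
    by (simp add: L)
  then show False
    using assms(2) sum_list_secant[OF f_def, of g] by simp
qed

lemma mset_eq_if_set_subset_Suc:
  assumes "set L \<subseteq> {f, Suc f}" "length L = R" "sum_list L = R * f + r"
  shows "mset L = replicate_mset r (Suc f) + replicate_mset (R - r) f"
proof -
  have "sum_list L = length L * f + count (mset L) (Suc f)"
    "count (mset L) f + count (mset L) (Suc f) = length L"
    using assms(1) by (induction L) auto
  then have "count (mset L) (Suc f) = r" "count (mset L) f = R - r"
    using assms(2,3) by simp_all
  then show ?thesis
    using assms(1) by (intro multiset_eqI) (auto simp: count_eq_zero_iff)
qed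

lemma ln_one_plus_gt_divide: "0 < (u::real) \<Longrightarrow> u / (1 + u) < ln (1 + u)"
proof -
  assume u: "0 < u"
  have "ln (1 / (1 + u)) < 1 / (1 + u) - 1"
    using u ln_le_minus_one[of "1 / (1 + u)"] ln_eq_minus_one[of "1 / (1 + u)"] by fastforce
  then show ?thesis
    using u by (simp add: ln_div field_simps)
qed

lemma mult_ln_midpoint_less:
  fixes t :: real
  assumes "0 < t"
  shows "2 * ((t + 1) * ln (t + 1)) < (t + 2) * ln (t + 2) + t * ln t"
proof -
  have "(1 / (t + 1)) / (1 + 1 / (t + 1)) = 1 / (t + 2)" "1 + 1 / (t + 1) = (t + 2) / (t + 1)"
    using assms by (simp_all add: field_simps)
  then have "1 / (t + 2) < ln ((t + 2) / (t + 1))"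
    using ln_one_plus_gt_divide[of "1 / (t + 1)"] assms by simp
  then have "1 / (t + 2) < ln (t + 2) - ln (t + 1)"
    using assms by (simp add: ln_div)
  then have upper: "1 < (t + 2) * (ln (t + 2) - ln (t + 1))"
    using assms by (simp add: field_simps)
  have "ln (t + 1) - ln t \<le> 1 / t"
    using ln_diff_le[of "t + 1" t] assms by simp
  then have lower: "t * (ln (t + 1) - ln t) \<le> 1"
    using assms by (simp add: field_simps)
  from upper lower show ?thesis
    by (simp add: algebra_simps)
qed

lemma strict_mono_run_weight_increment: "strict_mono (\<lambda>k. run_weight (Suc k) - run_weight k)"
proof (unfold strict_mono_Suc_iff, intro allI)
  fix k
  define t where "t = real k + 1"
  have "2 * ((t + 1) * ln (t + 1)) / ln 2 < ((t + 2) * ln (t + 2) + t * ln t) / ln 2"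
    using mult_ln_midpoint_less[of t] by (simp add: t_def divide_strict_right_mono)
  moreover have "run_weight k = t * ln t / ln 2" "run_weight (Suc k) = (t + 1) * ln (t + 1) / ln 2"
    "run_weight (Suc (Suc k)) = (t + 2) * ln (t + 2) / ln 2"
    by (simp_all add: run_weight_def log_def t_def algebra_simps)
  ultimately show "run_weight (Suc k) - run_weight k < run_weight (Suc (Suc k)) - run_weight (Suc k)"
    by (simp add: add_divide_distrib)
qed

section \<open>The maximal posterior entropy\<close>

lemma ceiling_of_nat_divide:
  assumes "0 < R" "m mod R \<noteq> 0"
  shows "\<lceil>real m / real R\<rceil> = int (Suc (m div R))"
proof (rule ceiling_unique)
  have "real m = real (R * (m div R) + m mod R)"
    by simp
  then have m: "real m = real R * real (m div R) + real (m mod R)"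
    by (simp only: of_nat_add of_nat_mult)
  have "0 < m mod R" "m mod R < R"
    using assms by simp_all
  then have "real R * real (m div R) < real m" "real m \<le> real R * (1 + real (m div R))"
    unfolding m by (simp_all add: distrib_left)
  then show "of_int (int (Suc (m div R))) - 1 < real m / real R"
    "real m / real R \<le> of_int (int (Suc (m div R)))"
    using assms(1) by (simp_all add: less_divide_eq divide_le_eq mult.commute)
qed

lemma balanced_sum_run_weight_eq:
  assumes "0 < R"
  shows "balanced_sum run_weight R m =
           real (m mod R) * (real_of_int \<lceil>real m / real R\<rceil> + 1)
             * log 2 (real_of_int \<lceil>real m / real R\<rceil> + 1)
           + real (R - m mod R) * (real_of_int \<lfloor>real m / real R\<rfloor> + 1)
             * log 2 (real_of_int \<lfloor>real m / real R\<rfloor> + 1)"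
proof (cases "m mod R = 0")
  case False
  then show ?thesis
    using ceiling_of_nat_divide[OF assms False]
    by (simp add: balanced_sum_def run_weight_def floor_divide_of_nat_eq add_ac)
qed (simp add: balanced_sum_def run_weight_def floor_divide_of_nat_eq add_ac)

lemma balanced_iff_mset_run_lengths:
  assumes "0 < R"
  shows "balanced R m y \<longleftrightarrow>
           mset (run_lengths y) =
             replicate_mset (m mod R) (Suc (m div R)) + replicate_mset (R - m mod R) (m div R)"
proof (cases "m mod R = 0")
  case False
  then show ?thesis
    by (simp only: balanced_def ceiling_of_nat_divide[OF assms False] floor_divide_of_nat_eq nat_int)
qed (simp add: balanced_def floor_divide_of_nat_eq)

lemma seqs_runs_run_lengths:
  assumes "y \<in> seqs_runs q R m"
  shows "length (run_lengths y) = R" "sum_list (run_lengths y) = m"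
  using assms by (simp_all add: seqs_runs_def seqs_def num_runs_def sum_list_run_lengths)

lemma H_in_del_le_balanced_sum:
  assumes "y \<in> seqs_runs q R m" "0 < q"
  shows "H_in_del q (Suc m) y \<le>
           log 2 (real (Suc m) * real q) - balanced_sum run_weight R m / (real (Suc m) * real q)"
proof -
  have "balanced_sum run_weight R m \<le> sum_list (map run_weight (run_lengths y))"
    using balanced_sum_le_sum_list[OF strict_mono_run_weight_increment, of "run_lengths y"]
    by (simp add: seqs_runs_run_lengths[OF assms(1)])
  then show ?thesis
    using assms by (simp add: H_in_del_eq_run_weights seqs_runs_def divide_right_mono)
qed

lemma balanced_if_H_in_del_eq_balanced_sum:
  assumes y: "y \<in> seqs_runs q R m" and "0 < q" "0 < R"
    and H: "H_in_del q (Suc m) y =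
              log 2 (real (Suc m) * real q) - balanced_sum run_weight R m / (real (Suc m) * real q)"
  shows "balanced R m y"
proof -
  have "sum_list (map run_weight (run_lengths y)) = balanced_sum run_weight R m"
    using H assms by (simp add: H_in_del_eq_run_weights seqs_runs_def)
  then have "set (run_lengths y) \<subseteq> {m div R, Suc (m div R)}"
    using set_subset_if_sum_list_eq_balanced_sum[OF strict_mono_run_weight_increment, of "run_lengths y"]
    by (simp add: seqs_runs_run_lengths[OF y])
  moreover have "sum_list (run_lengths y) = R * (m div R) + m mod R"
    by (simp add: seqs_runs_run_lengths[OF y])
  ultimately show ?thesis
    using mset_eq_if_set_subset_Suc seqs_runs_run_lengths[OF y] \<open>0 < R\<close>
    by (simp add: balanced_iff_mset_run_lengths)
qed

lemma exists_seqs_runs_H_in_del_eq_balanced_sum: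
  assumes "2 \<le> q" "0 < R" "R \<le> m"
  shows "\<exists>y\<in>seqs_runs q R m. H_in_del q (Suc m) y =
           log 2 (real (Suc m) * real q) - balanced_sum run_weight R m / (real (Suc m) * real q)"
proof -
  define L where "L = replicate (m mod R) (Suc (m div R)) @ replicate (R - m mod R) (m div R)"
  have "0 < m div R"
    using assms by (simp add: div_greater_zero_iff)
  then have "0 \<notin> set L"
    by (auto simp: L_def)
  then obtain y where y: "run_lengths y = L" "set y \<subseteq> {0, 1::nat}"
    using exists_run_lengths[of L "0::nat" 1] by auto
  have "m mod R < R"
    using assms by simp
  then have "length L = R" "sum_list L = R * (m div R) + m mod R"
    by (simp_all add: L_def sum_list_replicate algebra_simps)
  then have "y \<in> seqs_runs q R m"
    using y assms(1) sum_list_run_lengths[of y] by (auto simp: seqs_runs_def seqs_def num_runs_def)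
  moreover have "sum_list (map run_weight (run_lengths y)) = balanced_sum run_weight R m"
    by (simp add: y L_def balanced_sum_def sum_list_replicate)
  ultimately show ?thesis
    using assms(1) by (intro bexI[of _ y]) (simp_all add: H_in_del_eq_run_weights seqs_runs_def)
qed

lemma Max_H_in_del_seqs_runs:
  assumes "2 \<le> q" "0 < R" "R \<le> m"
  shows "Max (H_in_del q (Suc m) ` seqs_runs q R m) =
           log 2 (real (Suc m) * real q) - balanced_sum run_weight R m / (real (Suc m) * real q)"
proof (rule Max_eqI)
  show "finite (H_in_del q (Suc m) ` seqs_runs q R m)"
    using finite_subset[OF _ finite_seqs[of q m]] by (simp add: seqs_runs_def)
  show "h \<le> log 2 (real (Suc m) * real q) - balanced_sum run_weight R m / (real (Suc m) * real q)"
    if "h \<in> H_in_del q (Suc m) ` seqs_runs q R m" for h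
    using that assms H_in_del_le_balanced_sum by auto
  show "log 2 (real (Suc m) * real q) - balanced_sum run_weight R m / (real (Suc m) * real q)
      \<in> H_in_del q (Suc m) ` seqs_runs q R m"
    using exists_seqs_runs_H_in_del_eq_balanced_sum[OF assms] by (metis image_eqI)
qed

theorem lemma7:
  fixes q n m R r :: nat
  assumes "q \<ge> 2" and "n \<ge> 2" and "m = n - 1"
    and "1 \<le> R" and "R \<le> m" and "r = m mod R"
  shows "Max (H_in_del q n ` seqs_runs q R m) =
           log 2 (real n * real q)
           - real r / (real n * real q) * (real_of_int \<lceil>real m / real R\<rceil> + 1)
               * log 2 (real_of_int \<lceil>real m / real R\<rceil> + 1)
           - real (R - r) / (real n * real q) * (real_of_int \<lfloor>real m / real R\<rfloor> + 1)
               * log 2 (real_of_int \<lfloor>real m / real R\<rfloor> + 1)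
         \<and> (\<forall>y\<in>seqs_runs q R m.
           H_in_del q n y = Max (H_in_del q n ` seqs_runs q R m) \<longrightarrow> balanced R m y)"
proof -
  have n: "n = Suc m" and R: "0 < R"
    using assms by simp_all
  let ?S = "seqs_runs q R m"
  let ?H = "log 2 (real (Suc m) * real q) - balanced_sum run_weight R m / (real (Suc m) * real q)"
  have Max: "Max (H_in_del q (Suc m) ` ?S) = ?H"
    using assms by (intro Max_H_in_del_seqs_runs) simp_all
  have "balanced R m y" if y: "y \<in> ?S" and "H_in_del q (Suc m) y = ?H" for y
    using balanced_if_H_in_del_eq_balanced_sum[OF y _ R] that assms by simp
  moreover have "?H =
           log 2 (real (Suc m) * real q)
           - real r / (real (Suc m) * real q) * (real_of_int \<lceil>real m / real R\<rceil> + 1)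
               * log 2 (real_of_int \<lceil>real m / real R\<rceil> + 1)
           - real (R - r) / (real (Suc m) * real q) * (real_of_int \<lfloor>real m / real R\<rfloor> + 1)
               * log 2 (real_of_int \<lfloor>real m / real R\<rfloor> + 1)"
    unfolding balanced_sum_run_weight_eq[OF R] assms(6) by (simp add: add_divide_distrib)
  ultimately show ?thesis
    unfolding n Max by simp
qed

end
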